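(* Let $\mathbf{X}\subset\mathbb{R}^d$ be finite, $k\ge1$, $\ell>0$, $T\ge1$, and run the $k$-means$\parallel$ seeding algorithm with oversampling parameter $\ell$ for $T$ rounds, producing $C_1\subseteq C_2\subseteq\dots\subseteq C_{T+1}$. Then - if $\ell<k$: $\mathbb{E}[\mathrm{cost}(\mathbf{X},C_{T+1})]\le\big(e^{-\ell/k}\big)^T\,\mathbb{E}[\mathrm{cost}(\mathbf{X},C_1)]+\dfrac{5\,\mathrm{OPT}_k(\mathbf{X})}{1-e^{-\ell/k}}$; - if $\ell\ge k$: $\mathbb{E}[\mathrm{cost}(\mathbf{X},C_{T+1})]\le\big(\tfrac{k}{e\ell}\big)^T\,\mathbb{E}[\mathrm{cost}(\mathbf{X},C_1)]+\dfrac{5\,\mathrm{OPT}_k(\mathbf{X})}{1-k/(e\ell)}$.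
   Context: For a finite $C\subset\mathbb{R}^d$, $\mathrm{cost}(x,C)=\min_{c\in C}\|x-c\|^2$, $\mathrm{cost}(\mathbf{Y},C)=\sum_{x\in\mathbf{Y}}\mathrm{cost}(x,C)$, $\mathrm{OPT}_k(\mathbf{X})=\min_{|C|=k}\mathrm{cost}(\mathbf{X},C)$. The $k$-means$\parallel$ seeding algorithm with parameters $\ell,T$: choose $c$ uniformly at random from $\mathbf{X}$, $C_1=\{c\}$; for $t=1,\dots,T$, let $\lambda_t(x)=\ell\,\mathrm{cost}(x,C_t)/\mathrm{cost}(\mathbf{X},C_t)$, include each $x\in\mathbf{X}$ in a set $C'$ independently with probability $\min\{1,\lambda_t(x)\}$, and set $C_{t+1}=C_t\cup C'$. *)

theory Defs
  imports "HOL-Analysis.Analysis" "HOL-Probability.Probability"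
begin

definition cost :: "'a::euclidean_space \<Rightarrow> 'a set \<Rightarrow> real" where
  "cost x C = Min ((\<lambda>c. (norm (x - c))^2) ` C)"

definition cost_set :: "'a::euclidean_space set \<Rightarrow> 'a set \<Rightarrow> real" where
  "cost_set Y C = (\<Sum>x\<in>Y. cost x C)"

definition OPT :: "nat \<Rightarrow> 'a::euclidean_space set \<Rightarrow> real" where
  "OPT k X = Inf {cost_set X C | C. finite C \<and> card C = k}"

definition kmpar_step :: "'a::euclidean_space set \<Rightarrow> real \<Rightarrow> 'a set \<Rightarrow> 'a set pmf" where
  "kmpar_step X l C =
     map_pmf (\<lambda>b. C \<union> {x\<in>X. b x})
       (Pi_pmf X False (\<lambda>x. bernoulli_pmf (min 1 (l * cost x C / cost_set X C))))"

text \<open>kmpar_seed X l t is the distribution of C_{t+1}; C_1 = {c}, c uniform in X.\<close>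
fun kmpar_seed :: "'a::euclidean_space set \<Rightarrow> real \<Rightarrow> nat \<Rightarrow> 'a set pmf" where
  "kmpar_seed X l 0 = map_pmf (\<lambda>c. {c}) (pmf_of_set X)"
| "kmpar_seed X l (Suc t) = bind_pmf (kmpar_seed X l t) (kmpar_step X l)"

definition expected_cost :: "'a::euclidean_space set \<Rightarrow> real \<Rightarrow> nat \<Rightarrow> real" where
  "expected_cost X l t = measure_pmf.expectation (kmpar_seed X l t) (\<lambda>C. cost_set X C)"

end

theory Submission
  imports Defs
begin

text \<open>Fix k optimal centres and split X into their clusters A. In one round, with
  t = l / cost(X, C), each x \<in> A is sampled with probability at least 1 - exp (- t cost(x, C)),
  and a sampled x caps the cost of A at min (cost(A, C), \<Sum>y\<in>A. |y - x|^2). Sampling the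
  points of A in increasing order of their caps shows that the expected new cost of A is at most
  exp (- t cost(A, C)) cost(A, C) plus the cost-weighted average of the caps, and the latter is at
  most 5 OPT_1(A), as in the analysis of k-means++. Summing over the clusters, y exp (- t y) is
  bounded by its maximum 1 / (e t) or, when l < k, by its tangent at y = cost(X, C) / k; this
  gives the contraction factor k / (e l), resp. exp (- l / k), per round, and iterating yields a
  geometric series.\<close>

lemma mult_exp_neg_le: fixes x :: real shows "x * exp (-x) \<le> exp (-1)"
proof -
  have "x \<le> exp (x - 1)" using exp_ge_add_one_self[of "x - 1"] by simp
  hence "x * exp (-x) \<le> exp (x - 1) * exp (-x)" by (simp add: mult_right_mono)
  also have "\<dots> = exp (-1)" by (simp add: exp_add[symmetric])
  finally show ?thesis .
qed

lemma mult_exp_neg_le_tangent: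
  fixes a w :: real
  assumes "0 \<le> a" "a \<le> 1" "-a \<le> w"
  shows "(a + w) * exp (-w) \<le> a + (1 - a) * w"
proof -
  have nonneg: "0 \<le> a + (1 - a) * w"
  proof (cases "w \<ge> 0")
    case False
    hence "(1 - a) * w \<ge> w" using assms by (simp add: mult_le_cancel_right1)
    thus ?thesis using assms by linarith
  qed (use assms in simp)
  have "a + w \<le> (a + (1 - a) * w) * (1 + w)"
  proof -
    have "(a + (1 - a) * w) * (1 + w) = a + w + (1 - a) * w^2"
      by (simp add: algebra_simps power2_eq_square)
    moreover have "(1 - a) * w^2 \<ge> 0" using assms by simp
    ultimately show ?thesis by linarith
  qed
  also have "\<dots> \<le> (a + (1 - a) * w) * exp w"
    using nonneg exp_ge_add_one_self[of w] by (intro mult_left_mono) auto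
  finally have "(a + w) * exp (-w) \<le> (a + (1 - a) * w) * exp w * exp (-w)"
    by (intro mult_right_mono) auto
  also have "\<dots> = a + (1 - a) * w" by (simp add: mult.assoc exp_add[symmetric])
  finally show ?thesis .
qed

lemma one_minus_exp_neg_mult_le:
  fixes a b :: real
  assumes "0 \<le> a" "a \<le> b"
  shows "(1 - exp (-b)) * a \<le> (1 - exp (-a)) * b"
proof (cases "b = 0")
  case False
  hence b: "b > 0" using assms by simp
  define \<theta> where "\<theta> = a / b"
  have \<theta>: "0 \<le> \<theta>" "\<theta> \<le> 1" "\<theta> * b = a" using assms b by (auto simp: \<theta>_def)
  have "exp ((1 - \<theta>) * 0 + \<theta> * (-b)) \<le> (1 - \<theta>) * exp 0 + \<theta> * exp (-b)"
    using convex_onD[OF exp_convex, of \<theta> 0 "-b"] \<theta> by simp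
  hence "\<theta> * (1 - exp (-b)) \<le> 1 - exp (-a)" using \<theta>(3) by (simp add: algebra_simps)
  hence "\<theta> * (1 - exp (-b)) * b \<le> (1 - exp (-a)) * b" using b by (simp add: mult_right_mono)
  thus ?thesis using \<theta>(3) by (metis mult.commute mult.left_commute)
qed (use assms in simp)

lemma exp_neg_mixture_le:
  fixes l L v a :: real
  assumes "0 \<le> l" "0 < L" "v \<le> a"
  shows "(1 - exp (-l)) * v + exp (-l) * ((1 - exp (-L)) * a)
         \<le> (1 - exp (-(l + L))) * ((l * v + L * a) / (l + L))"
proof -
  define g0 where "g0 = 1 - exp (-l)"
  define g where "g = 1 - exp (-(l + L))"
  have lL: "l + L > 0" using assms by simp
  have split: "exp (-l) * ((1 - exp (-L)) * a) = (g - g0) * a"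
    by (simp add: g_def g0_def algebra_simps exp_add[symmetric])
  have "g * l \<le> g0 * (l + L)"
    unfolding g_def g0_def by (rule one_minus_exp_neg_mult_le) (use assms in auto)
  hence "g * l / (l + L) \<le> g0" using lL by (simp add: divide_le_eq)
  hence "0 \<le> (a - v) * (g0 - g * l / (l + L))" using assms by simp
  moreover have "g * ((l * v + L * a) / (l + L)) - (g0 * v + (g - g0) * a)
      = (a - v) * (g0 - g * l / (l + L))"
    using lL by (simp add: field_simps)
  ultimately show ?thesis unfolding split by (simp add: g_def g0_def)
qed

lemma exp_neg_mixture_step:
  fixes l L v S M :: real
  assumes "0 \<le> l" "0 \<le> L" "L = 0 \<Longrightarrow> S = 0" "L * v \<le> S"
  shows "(1 - exp (-l)) * v + exp (-l) * (exp (-L) * M + (1 - exp (-L)) * (S / L))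
         \<le> exp (-(l + L)) * M + (1 - exp (-(l + L))) * ((l * v + S) / (l + L))"
proof (cases "L = 0")
  case False
  hence L: "L > 0" using assms by simp
  have S: "L * (S / L) = S" using L by simp
  have "v \<le> S / L" using assms(4) L by (simp add: field_simps)
  from exp_neg_mixture_le[OF assms(1) L this]
  have "(1 - exp (-l)) * v + exp (-l) * ((1 - exp (-L)) * (S / L))
         \<le> (1 - exp (-(l + L))) * ((l * v + S) / (l + L))"
    unfolding S .
  moreover have "exp (-l) * (exp (-L) * M + (1 - exp (-L)) * (S / L))
      = exp (-(l + L)) * M + exp (-l) * ((1 - exp (-L)) * (S / L))"
    by (simp add: distrib_left mult.assoc[symmetric] exp_add[symmetric])
  ultimately show ?thesis by linarith
qed (use assms in simp)

text \<open>The pointwise inequality behind the D^2 sampling bound, in units of the root mean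
  cost g of the cluster: s = sqrt cost(x, C), r = distance of x to the centroid, and
  b = min over y of sqrt cost(y, C) + distance of y to the centroid, so that
  b - r \<le> s \<le> b + r.\<close>

lemma D2_pointwise_small_offset:
  fixes b r s :: real
  assumes "0 \<le> b" "b \<le> 1" "0 \<le> r" "0 \<le> s" "s \<le> b + r"
  shows "s^2 * min 1 (r^2) \<le> 4 * r^2"
proof (cases "r \<ge> 1")
  case True
  hence "s \<le> 2 * r" using assms by linarith
  hence "s^2 \<le> (2 * r)^2" using assms by (intro power_mono) auto
  thus ?thesis using True by (simp add: power_mult_distrib min_def)
next
  case False
  hence "s \<le> 2" using assms by linarith
  hence "s^2 \<le> 2^2" using assms by (intro power_mono) auto
  hence "s^2 * r^2 \<le> 4 * r^2" by (intro mult_right_mono) auto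
  moreover have "r^2 \<le> 1" using False assms by (simp add: power_le_one)
  ultimately show ?thesis by (simp add: min_def)
qed

lemma D2_pointwise_large_offset:
  fixes b r s :: real
  assumes "0 \<le> b" "2 \<le> b^2" "0 \<le> r" "0 \<le> s" "b - r \<le> s"
  shows "s^2 * min 1 (r^2) \<le> 4 * r^2 + (s^2 - 1)"
proof (cases "r \<ge> 1")
  case True
  hence "1 \<le> r^2" by (simp add: one_le_power)
  thus ?thesis by simp
next
  case False
  define q where "q = sqrt 2"
  have q: "q^2 = 2" "1 \<le> q" by (simp_all add: q_def)
  have "q \<le> b" using real_sqrt_le_mono[OF assms(2)] assms(1) by (simp add: q_def)
  have r: "r^2 \<le> 1" using False assms by (simp add: power_le_one)
  from \<open>q \<le> b\<close> have "(q - r)^2 \<le> s^2" using q False assms by (intro power_mono) auto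
  have key: "1 - 4 * r^2 \<le> (q - r)^2 * (1 - r^2)"
  proof -
    have "(q - r)^2 * (1 - r^2) - (1 - 4 * r^2) = (1 - q * r)^2 + r^2 * (1 + 2 * q * r - r^2)"
      by (simp add: algebra_simps power2_eq_square q(1)[unfolded power2_eq_square]
          power3_eq_cube power4_eq_xxxx)
    moreover have "0 \<le> q * r" using q assms by simp
    hence "0 \<le> r^2 * (1 + 2 * q * r - r^2)" using r by simp
    moreover have "0 \<le> (1 - q * r)^2" by simp
    ultimately show ?thesis by linarith
  qed
  have "(q - r)^2 * (1 - r^2) \<le> s^2 * (1 - r^2)"
    using \<open>(q - r)^2 \<le> s^2\<close> r by (intro mult_right_mono) auto
  thus ?thesis using key r by (simp add: algebra_simps min_def)
qed

lemma D2_pointwise_medium_offset_far: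
  fixes b r s :: real
  assumes "1 < b" "b^2 < 2" "1 \<le> r" "0 \<le> s" "s \<le> b + r"
  shows "s^2 \<le> 4 * r^2 + (b^2 - 1) * (s^2 - 1)"
proof -
  define u where "u = b^2 - 1"
  have "1 < b^2" using assms(1) by (simp add: one_less_power)
  hence u: "0 < u" "u = (b - 1) * (b + 1)" by (auto simp: u_def algebra_simps power2_eq_square)
  have "b < 2"
  proof (rule ccontr)
    assume "\<not> b < 2"
    hence "2^2 \<le> b^2" by (intro power_mono) auto
    thus False using assms(2) by simp
  qed
  have "s^2 * (1 - u) \<le> (b + r)^2 * (1 - u)"
    using assms u by (intro mult_right_mono power_mono) (auto simp: u_def)
  also have "\<dots> \<le> 4 * r^2 - u"
  proof -
    have "3 \<le> (b + r)^2 - 1"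
    proof -
      have "2^2 \<le> (b + r)^2" using assms by (intro power_mono) auto
      thus ?thesis by simp
    qed
    moreover have "(b - r) * (b + 3 * r) - u * ((b + r)^2 - 1) \<le> 0"
    proof (cases "r \<ge> b")
      case True
      hence "(b - r) * (b + 3 * r) \<le> 0" using assms by (intro mult_nonpos_nonneg) auto
      moreover have "0 \<le> u * ((b + r)^2 - 1)" using u \<open>3 \<le> (b + r)^2 - 1\<close> by simp
      ultimately show ?thesis by linarith
    next
      case False
      have "(b - r) * (b + 3 * r) \<le> (b - 1) * (4 * b)"
        using False assms by (intro mult_mono) auto
      moreover have "u * 3 \<le> u * ((b + r)^2 - 1)"
        using u(1) \<open>3 \<le> (b + r)^2 - 1\<close> by (intro mult_left_mono) auto
      moreover have "(b - 1) * (4 * b) - u * 3 = (b - 1) * (b - 3)" by (simp add: u algebra_simps)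
      moreover have "(b - 1) * (b - 3) \<le> 0" using assms \<open>b < 2\<close> by (intro mult_nonneg_nonpos) auto
      ultimately show ?thesis by linarith
    qed
    moreover have "(b + r)^2 * (1 - u) - (4 * r^2 - u) = (b - r) * (b + 3 * r) - u * ((b + r)^2 - 1)"
      by (simp add: algebra_simps power2_eq_square)
    ultimately show ?thesis by linarith
  qed
  finally show ?thesis by (simp add: u_def algebra_simps)
qed

lemma D2_pointwise_medium_offset_near_big_r:
  fixes b r s :: real
  assumes "1 < b" "b^2 < 2" "0 \<le> r" "r < 1" "b^2 - 1 \<le> r^2" "0 \<le> s" "s \<le> b + r"
  shows "s^2 * r^2 \<le> 4 * r^2 + (b^2 - 1) * (s^2 - 1)"
proof -
  define u where "u = b^2 - 1"
  have "1 < b^2" using assms(1) by (simp add: one_less_power)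
  hence u: "0 \<le> u" "u = (b - 1) * (b + 1)" "b^2 = 1 + u"
    by (auto simp: u_def algebra_simps power2_eq_square)
  have "s^2 * (r^2 - u) \<le> (b + r)^2 * (r^2 - u)"
    using assms by (intro mult_right_mono power_mono) (auto simp: u_def)
  also have "\<dots> \<le> 4 * r^2 - u"
  proof -
    have "(b + r)^2 * (r^2 - u) - (4 * r^2 - u) = r^2 * (r^2 + 2 * b * r - 3) - 2 * b * u * r - u^2"
      unfolding power2_eq_square[of "b + r"] using u(3)
      by (simp add: algebra_simps power2_eq_square power3_eq_cube power4_eq_xxxx)
    moreover have "r^2 * (r^2 + 2 * b * r - 3) \<le> r^2 * (2 * (b - 1) * r)"
    proof -
      have "r^2 + 2 * b * r - 3 = (r - 1) * (r + 3) + 2 * (b - 1) * r"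
        by (simp add: algebra_simps power2_eq_square)
      moreover have "(r - 1) * (r + 3) \<le> 0" using assms by (intro mult_nonpos_nonneg) auto
      ultimately show ?thesis by (intro mult_left_mono) auto
    qed
    moreover have "r^2 * (2 * (b - 1) * r) - 2 * b * u * r = 2 * (b - 1) * r * (r^2 - b * (b + 1))"
      by (simp add: u(2) algebra_simps power2_eq_square)
    moreover have "2 * (b - 1) * r * (r^2 - b * (b + 1)) \<le> 0"
    proof -
      have "1 * 1 \<le> b * (b + 1)" using assms by (intro mult_mono) auto
      moreover have "r^2 \<le> 1" using assms by (simp add: power_le_one)
      ultimately show ?thesis using assms by (intro mult_nonneg_nonpos) auto
    qed
    moreover have "0 \<le> u^2" by simp
    ultimately show ?thesis by linarith
  qed
  finally show ?thesis by (simp add: u_def algebra_simps)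
qed

lemma D2_pointwise_medium_offset_near_small_r:
  fixes b r s :: real
  assumes "1 < b" "b^2 < 2" "0 \<le> r" "r^2 < b^2 - 1" "b - r \<le> s"
  shows "s^2 * r^2 \<le> 4 * r^2 + (b^2 - 1) * (s^2 - 1)"
proof -
  define u where "u = b^2 - 1"
  have "r < b"
  proof (rule ccontr)
    assume "\<not> r < b"
    hence "b^2 \<le> r^2" using assms by (intro power_mono) auto
    thus False using assms(4) by simp
  qed
  have "(b - r)^2 * (u - r^2) \<le> s^2 * (u - r^2)"
    using assms \<open>r < b\<close> by (intro mult_right_mono power_mono) (auto simp: u_def)
  moreover have "u - 4 * r^2 \<le> (b - r)^2 * (u - r^2)"
  proof -
    have "(b - r)^2 = 1 + u - 2 * b * r + r^2" by (simp add: u_def algebra_simps power2_eq_square)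
    hence E: "(b - r)^2 * (u - r^2) - (u - 4 * r^2) = u * (u - 2 * b * r + r^2) + r^2 * (4 - (b - r)^2)"
      by (simp add: algebra_simps power2_eq_square)
    have "(b - r)^2 \<le> b^2" using assms \<open>r < b\<close> by (intro power_mono) auto
    hence "r^2 * 2 \<le> r^2 * (4 - (b - r)^2)" using assms by (intro mult_left_mono) auto
    moreover have "u * (u - 2 * b * r) \<le> u * (u - 2 * b * r + r^2)"
      using assms by (intro mult_left_mono) (auto simp: u_def)
    moreover have "u * (u - 2 * b * r) + r^2 * 2 = 2 * (r - u * b / 2)^2 + u^2 * (1 - b^2 / 2)"
      by (simp add: algebra_simps power2_eq_square)
    moreover have "0 \<le> u^2 * (1 - b^2 / 2)" using assms by simp
    moreover have "0 \<le> 2 * (r - u * b / 2)^2" by simp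
    ultimately show ?thesis using E by linarith
  qed
  ultimately show ?thesis by (simp add: u_def algebra_simps)
qed

lemma D2_pointwise_normalized:
  fixes b r s :: real
  assumes "0 \<le> b" "0 \<le> r" "0 \<le> s" "s \<le> b + r" "b - r \<le> s"
  shows "s^2 * min 1 (r^2) \<le> 4 * r^2 + max 0 (min 1 (b^2 - 1)) * (s^2 - 1)"
proof -
  consider "b \<le> 1" | "2 \<le> b^2" | "1 < b" "b^2 < 2" by fastforce
  thus ?thesis
  proof cases
    case 1
    hence "b^2 \<le> 1" using assms by (simp add: power_le_one)
    thus ?thesis using D2_pointwise_small_offset[OF assms(1) 1 assms(2-4)] by simp
  next
    case 2
    thus ?thesis using D2_pointwise_large_offset[OF assms(1) 2 assms(2,3,5)] by simp
  next
    case 3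
    hence w: "max 0 (min 1 (b^2 - 1)) = b^2 - 1" using one_less_power[of b 2] by simp
    consider "1 \<le> r" | "r < 1" "b^2 - 1 \<le> r^2" | "r^2 < b^2 - 1" by fastforce
    thus ?thesis
    proof cases
      case 1
      hence "min 1 (r^2) = 1" by (simp add: one_le_power)
      thus ?thesis using D2_pointwise_medium_offset_far[of b r s] 3 1 assms w by simp
    next
      case 2
      hence "min 1 (r^2) = r^2" using assms by (simp add: power_le_one)
      thus ?thesis using D2_pointwise_medium_offset_near_big_r[of b r s] 3 2 assms w by simp
    next
      case 4: 3
      hence "min 1 (r^2) = r^2" using \<open>b^2 < 2\<close> by simp
      thus ?thesis using D2_pointwise_medium_offset_near_small_r[of b r s] 3 4 assms w by simp
    qed
  qed
qed

lemma D2_pointwise: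
  fixes g b r c :: real
  assumes "0 < g" "0 \<le> b" "0 \<le> r" "0 \<le> c" "sqrt c \<le> b + r" "b - r \<le> sqrt c"
  shows "c * min (g^2) (r^2) \<le> 4 * g^2 * r^2 + max 0 (min 1 ((b / g)^2 - 1)) * g^2 * (c - g^2)"
proof -
  define w where "w = max 0 (min 1 ((b / g)^2 - 1))"
  have normalized: "(sqrt c / g)^2 * min 1 ((r / g)^2) \<le> 4 * (r / g)^2 + w * ((sqrt c / g)^2 - 1)"
    unfolding w_def using assms
    by (intro D2_pointwise_normalized)
      (auto simp: divide_right_mono diff_divide_distrib[symmetric] add_divide_distrib[symmetric])
  have c: "(sqrt c / g)^2 = c / g^2" using assms by (simp add: power_divide)
  have "min (g^2) (r^2) = g^2 * min 1 ((r / g)^2)"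
    using assms by (simp add: power_divide min_mult_distrib_left)
  hence "c * min (g^2) (r^2) = g^4 * ((sqrt c / g)^2 * min 1 ((r / g)^2))"
    unfolding c using assms by (simp add: field_simps power2_eq_square power4_eq_xxxx)
  also have "\<dots> \<le> g^4 * (4 * (r / g)^2 + w * ((sqrt c / g)^2 - 1))"
    using normalized by (intro mult_left_mono) auto
  also have "\<dots> = 4 * g^2 * r^2 + w * g^2 * (c - g^2)"
    unfolding c using assms by (simp add: field_simps power2_eq_square power4_eq_xxxx)
  finally show ?thesis unfolding w_def .
qed

lemma cost_le: "finite C \<Longrightarrow> c \<in> C \<Longrightarrow> cost x C \<le> (norm (x - c))^2"
  unfolding cost_def by (rule Min_le) auto

lemma cost_attained: "finite C \<Longrightarrow> C \<noteq> {} \<Longrightarrow> \<exists>c\<in>C. cost x C = (norm (x - c))^2"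
  unfolding cost_def by (metis (no_types, lifting) Min_in finite_imageI image_iff image_is_empty)

lemma cost_nonneg: "finite C \<Longrightarrow> C \<noteq> {} \<Longrightarrow> 0 \<le> cost x C"
  using cost_attained[of C x] by auto

lemma cost_antimono: "finite D \<Longrightarrow> C \<subseteq> D \<Longrightarrow> C \<noteq> {} \<Longrightarrow> cost x D \<le> cost x C"
  unfolding cost_def by (rule Min_antimono) auto

lemma cost_set_nonneg: "finite C \<Longrightarrow> C \<noteq> {} \<Longrightarrow> 0 \<le> cost_set Y C"
  unfolding cost_set_def by (intro sum_nonneg cost_nonneg)

lemma cost_set_antimono: "finite D \<Longrightarrow> C \<subseteq> D \<Longrightarrow> C \<noteq> {} \<Longrightarrow> cost_set Y D \<le> cost_set Y C"
  unfolding cost_set_def by (intro sum_mono cost_antimono)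

lemma sqrt_cost_le:
  assumes "finite C" "C \<noteq> {}"
  shows "sqrt (cost x C) \<le> sqrt (cost y C) + norm (x - y)"
proof -
  obtain c where c: "c \<in> C" "cost y C = (norm (y - c))^2" using cost_attained[OF assms] by blast
  have "sqrt (cost x C) \<le> sqrt ((norm (x - c))^2)"
    using cost_le[OF assms(1) c(1)] by (rule real_sqrt_le_mono)
  also have "\<dots> \<le> norm (x - y) + norm (y - c)"
    using norm_triangle_ineq[of "x - y" "y - c"] by simp
  finally show ?thesis using c by simp
qed

definition centroid :: "'a::euclidean_space set \<Rightarrow> 'a" where
  "centroid A = (1 / real (card A)) *\<^sub>R (\<Sum>A)"

definition centroid_cost :: "'a::euclidean_space set \<Rightarrow> real" where
  "centroid_cost A = (\<Sum>y\<in>A. (norm (y - centroid A))^2)"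

lemma centroid_cost_nonneg: "0 \<le> centroid_cost A"
  unfolding centroid_cost_def by (intro sum_nonneg) auto

lemma sum_diff_centroid: "finite A \<Longrightarrow> A \<noteq> {} \<Longrightarrow> (\<Sum>y\<in>A. y - centroid A) = 0"
  by (simp add: sum_subtractf centroid_def card_gt_0_iff sum_constant_scaleR)

lemma sum_sq_dist_eq_centroid_cost:
  fixes A :: "'a::euclidean_space set"
  assumes "finite A" "A \<noteq> {}"
  shows "(\<Sum>y\<in>A. (norm (y - z))^2) = centroid_cost A + real (card A) * (norm (z - centroid A))^2"
proof -
  define \<mu> where "\<mu> = centroid A"
  have "(norm (y - z))^2 = (norm (y - \<mu>))^2 - 2 * ((y - \<mu>) \<bullet> (z - \<mu>)) + (norm (z - \<mu>))^2" for y
  proof -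
    have "(norm (y - z))^2 = (norm ((y - \<mu>) - (z - \<mu>)))^2" by simp
    also have "\<dots> = (norm (y - \<mu>))^2 - 2 * ((y - \<mu>) \<bullet> (z - \<mu>)) + (norm (z - \<mu>))^2"
      by (simp add: power2_norm_eq_inner inner_diff_left inner_diff_right inner_commute)
    finally show ?thesis .
  qed
  hence "(\<Sum>y\<in>A. (norm (y - z))^2) = (\<Sum>y\<in>A. (norm (y - \<mu>))^2)
      - 2 * (\<Sum>y\<in>A. (y - \<mu>) \<bullet> (z - \<mu>)) + (\<Sum>y\<in>A. (norm (z - \<mu>))^2)"
    by (simp add: sum.distrib sum_subtractf sum_distrib_left)
  moreover have "(\<Sum>y\<in>A. (y - \<mu>) \<bullet> (z - \<mu>)) = 0"
    using sum_diff_centroid[OF assms] by (simp add: \<mu>_def inner_sum_left[symmetric])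
  ultimately show ?thesis by (simp add: \<mu>_def centroid_cost_def)
qed

lemma centroid_cost_le_sum_sq_dist:
  "finite A \<Longrightarrow> centroid_cost A \<le> (\<Sum>y\<in>A. (norm (y - z))^2)"
  using sum_sq_dist_eq_centroid_cost[of A z] by (cases "A = {}") (auto simp: centroid_cost_def)

text \<open>Summed over the cluster A, the terms cost x C - g^2 of D2_pointwise cancel, since g^2
  is the mean cost of A.\<close>

lemma sum_cost_mult_min_le:
  fixes A C :: "'a::euclidean_space set"
  defines "g2 \<equiv> cost_set A C / real (card A)"
  assumes A: "finite A" "A \<noteq> {}" and C: "finite C" "C \<noteq> {}" and pos: "cost_set A C > 0"
  shows "(\<Sum>x\<in>A. cost x C * min g2 ((norm (x - centroid A))^2)) \<le> 4 * g2 * centroid_cost A"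
proof -
  define \<rho> where "\<rho> x = norm (x - centroid A)" for x
  define g where "g = sqrt g2"
  have m: "real (card A) > 0" using A by (simp add: card_gt_0_iff)
  hence g: "g > 0" "g^2 = g2" using pos by (simp_all add: g_def g2_def)
  have c0: "0 \<le> cost x C" for x using cost_nonneg[OF C] .
  define b where "b = Min ((\<lambda>y. sqrt (cost y C) + \<rho> y) ` A)"
  have b_le: "b \<le> sqrt (cost x C) + \<rho> x" if "x \<in> A" for x
    unfolding b_def by (rule Min_le) (use A that in simp_all)
  have "b \<in> (\<lambda>y. sqrt (cost y C) + \<rho> y) ` A" unfolding b_def by (rule Min_in) (use A in simp_all)
  then obtain y0 where y0: "y0 \<in> A" "b = sqrt (cost y0 C) + \<rho> y0" by blast
  have b0: "0 \<le> b" using y0 c0[of y0] by (simp add: \<rho>_def)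
  have le_b: "sqrt (cost x C) \<le> b + \<rho> x" for x
  proof -
    have "sqrt (cost x C) \<le> sqrt (cost y0 C) + norm (x - y0)" by (rule sqrt_cost_le[OF C])
    also have "norm (x - y0) \<le> \<rho> x + \<rho> y0"
      unfolding \<rho>_def using norm_triangle_ineq4[of "x - centroid A" "y0 - centroid A"] by simp
    finally show ?thesis using y0 by simp
  qed
  define w where "w = max 0 (min 1 ((b / g)^2 - 1))"
  have "(\<Sum>x\<in>A. cost x C * min (g^2) ((\<rho> x)^2))
      \<le> (\<Sum>x\<in>A. 4 * g^2 * (\<rho> x)^2 + w * g^2 * (cost x C - g^2))"
  proof (rule sum_mono)
    fix x assume "x \<in> A"
    show "cost x C * min (g^2) ((\<rho> x)^2) \<le> 4 * g^2 * (\<rho> x)^2 + w * g^2 * (cost x C - g^2)"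
      unfolding w_def using g b0 c0 le_b[of x] b_le[OF \<open>x \<in> A\<close>]
      by (intro D2_pointwise) (auto simp: \<rho>_def)
  qed
  also have "\<dots> = 4 * g^2 * centroid_cost A + w * g^2 * (cost_set A C - real (card A) * g^2)"
    by (simp add: sum.distrib sum_distrib_left sum_subtractf centroid_cost_def \<rho>_def
        cost_set_def right_diff_distrib)
  also have "cost_set A C - real (card A) * g^2 = 0" using m by (simp add: g g2_def)
  finally show ?thesis by (simp add: g \<rho>_def)
qed

lemma D2_sampling_bound:
  fixes A C :: "'a::euclidean_space set"
  assumes A: "finite A" "A \<noteq> {}" and C: "finite C" "C \<noteq> {}"
  shows "(\<Sum>x\<in>A. cost x C * min (cost_set A C) (\<Sum>y\<in>A. (norm (y - x))^2))
           \<le> 5 * cost_set A C * centroid_cost A"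
proof (cases "cost_set A C = 0")
  case True
  hence "\<forall>x\<in>A. cost x C = 0"
    using sum_nonneg_eq_0_iff[OF A(1), of "\<lambda>x. cost x C"] cost_nonneg[OF C]
    by (simp add: cost_set_def)
  thus ?thesis using True by simp
next
  case False
  define \<Phi> m R where "\<Phi> = cost_set A C" and "m = real (card A)" and "R = centroid_cost A"
  define \<rho> where "\<rho> x = norm (x - centroid A)" for x
  have m: "m > 0" using A by (simp add: m_def card_gt_0_iff)
  have \<Phi>: "\<Phi> > 0" using False cost_set_nonneg[OF C, of A] by (simp add: \<Phi>_def)
  have pointwise: "cost x C * min \<Phi> (\<Sum>y\<in>A. (norm (y - x))^2)
      \<le> cost x C * R + m * (cost x C * min (\<Phi> / m) ((\<rho> x)^2))" for x
  proof -
    have "min \<Phi> (R + m * (\<rho> x)^2) \<le> R + min \<Phi> (m * (\<rho> x)^2)"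
      using centroid_cost_nonneg[of A] by (simp add: R_def)
    also have "min \<Phi> (m * (\<rho> x)^2) = m * min (\<Phi> / m) ((\<rho> x)^2)"
      using m by (simp add: min_mult_distrib_left)
    finally have "min \<Phi> (R + m * (\<rho> x)^2) \<le> R + m * min (\<Phi> / m) ((\<rho> x)^2)" .
    hence "cost x C * min \<Phi> (R + m * (\<rho> x)^2) \<le> cost x C * (R + m * min (\<Phi> / m) ((\<rho> x)^2))"
      using cost_nonneg[OF C] by (intro mult_left_mono) auto
    thus ?thesis
      using sum_sq_dist_eq_centroid_cost[OF A, of x] by (simp add: R_def m_def \<rho>_def algebra_simps)
  qed
  have "(\<Sum>x\<in>A. cost x C * min \<Phi> (\<Sum>y\<in>A. (norm (y - x))^2))
      \<le> (\<Sum>x\<in>A. cost x C * R + m * (cost x C * min (\<Phi> / m) ((\<rho> x)^2)))"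
    by (intro sum_mono pointwise)
  also have "\<dots> = \<Phi> * R + m * (\<Sum>x\<in>A. cost x C * min (\<Phi> / m) ((\<rho> x)^2))"
    by (simp add: sum.distrib sum_distrib_left sum_distrib_right \<Phi>_def cost_set_def)
  also have "\<dots> \<le> \<Phi> * R + m * (4 * (\<Phi> / m) * R)"
    using sum_cost_mult_min_le[OF A C] \<Phi> m
    by (intro add_left_mono mult_left_mono) (auto simp: \<Phi>_def m_def R_def \<rho>_def)
  also have "\<dots> = 5 * \<Phi> * R" using m by simp
  finally show ?thesis by (simp add: \<Phi>_def R_def)
qed

lemma D2_sampling_mean_le:
  fixes A C :: "'a::euclidean_space set"
  defines "\<Phi> \<equiv> cost_set A C"
  assumes A: "finite A" "A \<noteq> {}" and C: "finite C" "C \<noteq> {}" and t: "t \<ge> 0"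
  shows "(1 - exp (-(t * \<Phi>))) * ((\<Sum>x\<in>A. t * cost x C * min \<Phi> (\<Sum>y\<in>A. (norm (y - x))^2)) / (t * \<Phi>))
    \<le> 5 * centroid_cost A"
proof (cases "t * \<Phi> = 0")
  case False
  have \<Phi>: "0 \<le> \<Phi>" unfolding \<Phi>_def by (rule cost_set_nonneg[OF C])
  from False have "(\<Sum>x\<in>A. t * cost x C * min \<Phi> (\<Sum>y\<in>A. (norm (y - x))^2)) / (t * \<Phi>)
      = (\<Sum>x\<in>A. cost x C * min \<Phi> (\<Sum>y\<in>A. (norm (y - x))^2)) / \<Phi>"
    by (simp add: sum_distrib_left[symmetric] mult.assoc)
  also have "\<dots> \<le> 5 * centroid_cost A"
    using D2_sampling_bound[OF A C] False \<Phi>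
    by (simp add: divide_le_eq \<Phi>_def mult.commute mult.left_commute)
  finally have "(1 - exp (-(t * \<Phi>))) * ((\<Sum>x\<in>A. t * cost x C * min \<Phi> (\<Sum>y\<in>A. (norm (y - x))^2)) / (t * \<Phi>))
      \<le> (1 - exp (-(t * \<Phi>))) * (5 * centroid_cost A)"
    using t \<Phi> by (intro mult_left_mono) auto
  also have "\<dots> \<le> 5 * centroid_cost A"
    using centroid_cost_nonneg[of A] t \<Phi> by (intro mult_left_le_one_le) auto
  finally show ?thesis .
qed (use centroid_cost_nonneg[of A] in auto)

lemma finite_set_Pi_pmf_bool: "finite A \<Longrightarrow> finite (set_pmf (Pi_pmf A False (q :: 'a \<Rightarrow> bool pmf)))"
  by (rule finite_subset[OF set_Pi_pmf_subset']) auto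

lemma expectation_bind_pmf_finite:
  fixes h :: "'b \<Rightarrow> real"
  assumes "finite (set_pmf p)" "\<And>x. x \<in> set_pmf p \<Longrightarrow> finite (set_pmf (f x))"
  shows "measure_pmf.expectation (bind_pmf p f) h
       = measure_pmf.expectation p (\<lambda>x. measure_pmf.expectation (f x) h)"
proof -
  have "measure_pmf.expectation (bind_pmf p f) h
      = (\<Sum>a\<in>set_pmf p. pmf p a *\<^sub>R measure_pmf.expectation (f a) h)"
    by (rule pmf_expectation_bind) (use assms in auto)
  also have "\<dots> = measure_pmf.expectation p (\<lambda>x. measure_pmf.expectation (f x) h)"
    by (rule integral_measure_pmf[symmetric]) (use assms in auto)
  finally show ?thesis .
qed

lemma expectation_mono_finite:
  fixes f g :: "'b \<Rightarrow> real"
  assumes "finite (set_pmf p)" "\<And>x. x \<in> set_pmf p \<Longrightarrow> f x \<le> g x"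
  shows "measure_pmf.expectation p f \<le> measure_pmf.expectation p g"
  using assms by (intro integral_mono_AE integrable_measure_pmf_finite) (auto simp: AE_measure_pmf_iff)

lemma expectation_Pi_pmf_bernoulli_insert:
  fixes h :: "('a \<Rightarrow> bool) \<Rightarrow> real" and A :: "'a set" and p :: "'a \<Rightarrow> real"
  defines "Q \<equiv> Pi_pmf A False (\<lambda>z. bernoulli_pmf (p z))"
  assumes "finite A" "x \<notin> A" "0 \<le> p x" "p x \<le> 1"
  shows "measure_pmf.expectation (Pi_pmf (insert x A) False (\<lambda>z. bernoulli_pmf (p z))) h
       = p x * measure_pmf.expectation Q (\<lambda>f. h (f(x := True)))
       + (1 - p x) * measure_pmf.expectation Q (\<lambda>f. h (f(x := False)))"
proof -
  have "Pi_pmf (insert x A) False (\<lambda>z. bernoulli_pmf (p z))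
      = bind_pmf (bernoulli_pmf (p x)) (\<lambda>y. map_pmf (\<lambda>f. f(x := y)) Q)"
    using assms by (simp add: Pi_pmf_insert' map_pmf_def)
  hence "measure_pmf.expectation (Pi_pmf (insert x A) False (\<lambda>z. bernoulli_pmf (p z))) h
       = measure_pmf.expectation (bernoulli_pmf (p x))
           (\<lambda>y. measure_pmf.expectation Q (\<lambda>f. h (f(x := y))))"
    by (simp add: expectation_bind_pmf_finite finite_set_Pi_pmf_bool Q_def assms)
  thus ?thesis using assms by (simp add: algebra_simps)
qed

lemma expectation_Pi_pmf_restrict:
  fixes G :: "('a \<Rightarrow> bool) \<Rightarrow> real"
  assumes "finite X" "A \<subseteq> X" "\<And>b. G (\<lambda>x. if x \<in> A then b x else False) = G b"
  shows "measure_pmf.expectation (Pi_pmf X False q) G = measure_pmf.expectation (Pi_pmf A False q) G"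
proof -
  have "Pi_pmf A False q = map_pmf (\<lambda>f x. if x \<in> A then f x else False) (Pi_pmf X False q)"
    using assms by (intro Pi_pmf_subset) auto
  thus ?thesis using assms(3) by simp
qed

lemma expectation_Min_sampled_insert_min:
  fixes A :: "'a set" and v p :: "'a \<Rightarrow> real" and M :: real
  defines "E \<equiv> \<lambda>B. measure_pmf.expectation (Pi_pmf B False (\<lambda>z. bernoulli_pmf (p z)))
                    (\<lambda>b. Min (insert M (v ` {x\<in>B. b x})))"
  assumes A: "finite A" "x0 \<notin> A" and min: "\<And>y. y \<in> A \<Longrightarrow> v x0 \<le> v y" "v x0 \<le> M"
    and p: "0 \<le> p x0" "p x0 \<le> 1"
  shows "E (insert x0 A) = p x0 * v x0 + (1 - p x0) * E A" and "v x0 \<le> E A"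
proof -
  define Q where "Q = Pi_pmf A False (\<lambda>z. bernoulli_pmf (p z))"
  have hit: "Min (insert M (v ` {x\<in>insert x0 A. (f(x0 := True)) x})) = v x0" for f
  proof -
    have "{x\<in>insert x0 A. (f(x0 := True)) x} = insert x0 {x\<in>A. f x}" using A by auto
    thus ?thesis by (simp only:) (rule Min_eqI, use A min in auto)
  qed
  have miss: "{x\<in>insert x0 A. (f(x0 := False)) x} = {x\<in>A. f x}" for f using A by auto
  have "E (insert x0 A)
      = p x0 * measure_pmf.expectation Q (\<lambda>f. Min (insert M (v ` {x\<in>insert x0 A. (f(x0 := True)) x})))
      + (1 - p x0) * measure_pmf.expectation Q (\<lambda>f. Min (insert M (v ` {x\<in>insert x0 A. (f(x0 := False)) x})))"
    unfolding E_def Q_def by (rule expectation_Pi_pmf_bernoulli_insert) (use A p in auto)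
  thus "E (insert x0 A) = p x0 * v x0 + (1 - p x0) * E A"
    by (simp only: hit miss) (simp add: E_def Q_def)
  have "v x0 \<le> Min (insert M (v ` {x\<in>A. b x}))" for b using A min by (intro Min.boundedI) auto
  thus "v x0 \<le> E A"
    using expectation_mono_finite[OF finite_set_Pi_pmf_bool[OF A(1), of "\<lambda>z. bernoulli_pmf (p z)"],
        where f = "\<lambda>_. v x0" and g = "\<lambda>b. Min (insert M (v ` {x\<in>A. b x}))"]
    unfolding E_def by simp
qed

lemma expectation_Min_sampled_le:
  fixes A :: "'a set" and v lam p :: "'a \<Rightarrow> real" and M :: real
  assumes "finite A" and vM: "\<And>x. v x \<le> M" and lam: "\<And>x. 0 \<le> lam x"
    and p: "\<And>x. 1 - exp (-lam x) \<le> p x" "\<And>x. p x \<le> 1"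
  shows "measure_pmf.expectation (Pi_pmf A False (\<lambda>z. bernoulli_pmf (p z)))
            (\<lambda>b. Min (insert M (v ` {x\<in>A. b x})))
    \<le> exp (-(\<Sum>x\<in>A. lam x)) * M
       + (1 - exp (-(\<Sum>x\<in>A. lam x))) * ((\<Sum>x\<in>A. lam x * v x) / (\<Sum>x\<in>A. lam x))"
  using \<open>finite A\<close>
proof (induction A rule: finite_remove_induct)
  case (remove A)
  define E where "E B = measure_pmf.expectation (Pi_pmf B False (\<lambda>z. bernoulli_pmf (p z)))
                    (\<lambda>b. Min (insert M (v ` {x\<in>B. b x})))" for B
  have "Min (v ` A) \<in> v ` A" using remove by (intro Min_in) auto
  then obtain x0 where x0: "x0 \<in> A" "v x0 = Min (v ` A)" by auto
  have x0_min: "v x0 \<le> v y" if "y \<in> A" for y using x0 that remove by simp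
  define A' where "A' = A - {x0}"
  have A': "A = insert x0 A'" "x0 \<notin> A'" "finite A'" using x0 remove by (auto simp: A'_def)
  define l L S where "l = lam x0" and "L = (\<Sum>x\<in>A'. lam x)" and "S = (\<Sum>x\<in>A'. lam x * v x)"
  have IH: "E A' \<le> exp (-L) * M + (1 - exp (-L)) * (S / L)"
    unfolding E_def L_def S_def A'_def by (rule remove.IH[OF x0(1)])
  have p0: "0 \<le> p x0"
  proof -
    have "exp (-lam x0) \<le> 1" using lam[of x0] by simp
    thus ?thesis using p(1)[of x0] by linarith
  qed
  have insert_min: "E A = p x0 * v x0 + (1 - p x0) * E A'" "v x0 \<le> E A'"
    using expectation_Min_sampled_insert_min[of A' x0 v M p] A' x0_min vM p0 p(2)
    unfolding E_def by auto
  have "E A = p x0 * v x0 + (1 - p x0) * E A'" by (rule insert_min(1))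
  also have "\<dots> \<le> (1 - exp (-l)) * v x0 + exp (-l) * E A'"
  proof -
    have "(p x0 - (1 - exp (-l))) * (v x0 - E A') \<le> 0"
      using p(1)[of x0] insert_min(2) by (intro mult_nonneg_nonpos) (auto simp: l_def)
    thus ?thesis by (simp add: algebra_simps)
  qed
  also have "\<dots> \<le> (1 - exp (-l)) * v x0 + exp (-l) * (exp (-L) * M + (1 - exp (-L)) * (S / L))"
    using IH by simp
  also have "\<dots> \<le> exp (-(l + L)) * M + (1 - exp (-(l + L))) * ((l * v x0 + S) / (l + L))"
  proof (rule exp_neg_mixture_step)
    show "0 \<le> l" "0 \<le> L" using lam by (auto simp: l_def L_def intro: sum_nonneg)
    show "S = 0" if "L = 0"
      using that sum_nonneg_eq_0_iff[OF A'(3), of lam] lam by (simp add: L_def S_def)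
    show "L * v x0 \<le> S"
      unfolding L_def S_def sum_distrib_right
      by (intro sum_mono) (use A' x0_min lam in \<open>auto simp: mult.commute intro: mult_left_mono\<close>)
  qed
  finally show ?case
    using A' by (simp add: E_def l_def L_def S_def)
qed simp

lemma cost_set_union_le_Min_sampled:
  fixes X A C :: "'a::euclidean_space set"
  assumes "finite X" "A \<subseteq> X" "finite C" "C \<noteq> {}"
  shows "cost_set A (C \<union> {x\<in>X. b x})
    \<le> Min (insert (cost_set A C) ((\<lambda>x. min (cost_set A C) (\<Sum>y\<in>A. (norm (y - x))^2)) ` {x\<in>A. b x}))"
proof -
  let ?D = "C \<union> {x\<in>X. b x}"
  have D: "finite ?D" using assms by auto
  have "cost_set A ?D \<le> cost_set A C" by (rule cost_set_antimono) (use D assms in auto)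
  moreover have "cost_set A ?D \<le> (\<Sum>y\<in>A. (norm (y - x))^2)" if "x \<in> A" "b x" for x
  proof -
    have "x \<in> ?D" using that assms by auto
    thus ?thesis unfolding cost_set_def by (intro sum_mono cost_le[OF D])
  qed
  ultimately show ?thesis using finite_subset[OF assms(2,1)] by (subst Min_ge_iff) auto
qed

lemma expected_cluster_cost_le:
  fixes X A C :: "'a::euclidean_space set" and t :: real
  assumes X: "finite X" "A \<subseteq> X" and C: "finite C" "C \<noteq> {}" and t: "t \<ge> 0"
  shows "measure_pmf.expectation (Pi_pmf X False (\<lambda>x. bernoulli_pmf (min 1 (t * cost x C))))
           (\<lambda>b. cost_set A (C \<union> {x\<in>X. b x}))
         \<le> exp (-(t * cost_set A C)) * cost_set A C + 5 * centroid_cost A"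
proof (cases "A = {}")
  case False
  have A: "finite A" using X finite_subset by blast
  define \<Phi> where "\<Phi> = cost_set A C"
  define v where "v x = min \<Phi> (\<Sum>y\<in>A. (norm (y - x))^2)" for x
  define lam where "lam x = t * cost x C" for x
  define G where "G b = Min (insert \<Phi> (v ` {x\<in>A. b x}))" for b
  have sum_lam: "(\<Sum>x\<in>A. lam x) = t * \<Phi>"
    by (simp add: lam_def \<Phi>_def cost_set_def sum_distrib_left)
  have mean: "(1 - exp (-(t * \<Phi>))) * ((\<Sum>x\<in>A. lam x * v x) / (t * \<Phi>)) \<le> 5 * centroid_cost A"
    unfolding lam_def v_def \<Phi>_def by (rule D2_sampling_mean_le[OF A \<open>A \<noteq> {}\<close> C t])
  let ?P = "\<lambda>B. Pi_pmf B False (\<lambda>x. bernoulli_pmf (min 1 (lam x)))"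
  have "measure_pmf.expectation (?P X) (\<lambda>b. cost_set A (C \<union> {x\<in>X. b x}))
      \<le> measure_pmf.expectation (?P X) G"
    unfolding G_def v_def \<Phi>_def
    by (intro expectation_mono_finite finite_set_Pi_pmf_bool cost_set_union_le_Min_sampled X C)
  also have "\<dots> = measure_pmf.expectation (?P A) G"
  proof (rule expectation_Pi_pmf_restrict[OF X])
    show "G (\<lambda>x. if x \<in> A then b x else False) = G b" for b
      unfolding G_def by (rule arg_cong[where f = "\<lambda>S. Min (insert \<Phi> (v ` S))"]) auto
  qed
  also have "\<dots> \<le> exp (-(\<Sum>x\<in>A. lam x)) * \<Phi>
       + (1 - exp (-(\<Sum>x\<in>A. lam x))) * ((\<Sum>x\<in>A. lam x * v x) / (\<Sum>x\<in>A. lam x))"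
    unfolding G_def
  proof (rule expectation_Min_sampled_le[OF A])
    show "v x \<le> \<Phi>" "0 \<le> lam x" "min 1 (lam x) \<le> 1" for x
      using t cost_nonneg[OF C] by (auto simp: v_def lam_def)
    show "1 - exp (- lam x) \<le> min 1 (lam x)" for x
      using exp_ge_add_one_self[of "- lam x"] by simp
  qed
  also have "\<dots> \<le> exp (-(t * \<Phi>)) * \<Phi> + 5 * centroid_cost A"
    using mean unfolding sum_lam by simp
  finally show ?thesis by (simp add: \<Phi>_def lam_def)
qed (simp add: cost_set_def centroid_cost_def)

lemma sum_mult_exp_neg_le_card:
  fixes Cs :: "'b set" and \<Phi> :: "'b \<Rightarrow> real" and Z l :: real
  assumes "Z > 0" "l > 0"
  shows "(\<Sum>c\<in>Cs. exp (-(l / Z * \<Phi> c)) * \<Phi> c) \<le> real (card Cs) / (exp 1 * l) * Z"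
proof -
  have "exp (-(l / Z * \<Phi> c)) * \<Phi> c = Z / l * ((l / Z * \<Phi> c) * exp (-(l / Z * \<Phi> c)))" for c
    using assms by (simp add: field_simps)
  also have "Z / l * ((l / Z * \<Phi> c) * exp (-(l / Z * \<Phi> c))) \<le> Z / l * exp (-1)" for c
    using assms mult_exp_neg_le[of "l / Z * \<Phi> c"] by (intro mult_left_mono) auto
  finally have "(\<Sum>c\<in>Cs. exp (-(l / Z * \<Phi> c)) * \<Phi> c) \<le> (\<Sum>c\<in>Cs. Z / l * exp (-1))"
    by (intro sum_mono)
  thus ?thesis by (simp add: exp_minus field_simps)
qed

lemma sum_mult_exp_neg_le_exp:
  fixes Cs :: "'b set" and \<Phi> :: "'b \<Rightarrow> real" and Z l :: real
  assumes "finite Cs" "card Cs = k" "k \<ge> 1" "\<And>c. c \<in> Cs \<Longrightarrow> 0 \<le> \<Phi> c"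
    "(\<Sum>c\<in>Cs. \<Phi> c) = Z" "Z > 0" "l > 0" "l \<le> k"
  shows "(\<Sum>c\<in>Cs. exp (-(l / Z * \<Phi> c)) * \<Phi> c) \<le> exp (- l / k) * Z"
proof -
  define a where "a = l / k"
  have a: "0 \<le> a" "a \<le> 1" "k * a = l" using assms by (auto simp: a_def)
  define y where "y c = l / Z * \<Phi> c" for c
  have tangent: "exp (-(l / Z * \<Phi> c)) * \<Phi> c \<le> Z / l * (exp (-a) * (a + (1 - a) * (y c - a)))"
    if "c \<in> Cs" for c
  proof -
    have "y c * exp (- y c) = exp (-a) * ((a + (y c - a)) * exp (-(y c - a)))"
      by (simp add: exp_add[symmetric] algebra_simps)
    also have "\<dots> \<le> exp (-a) * (a + (1 - a) * (y c - a))"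
      using a assms that by (intro mult_left_mono mult_exp_neg_le_tangent) (auto simp: y_def)
    finally have "Z / l * (y c * exp (- y c)) \<le> Z / l * (exp (-a) * (a + (1 - a) * (y c - a)))"
      using assms by (intro mult_left_mono) auto
    moreover have "Z / l * (y c * exp (- y c)) = exp (-(l / Z * \<Phi> c)) * \<Phi> c"
      using assms by (simp add: y_def field_simps)
    ultimately show ?thesis by simp
  qed
  have "(\<Sum>c\<in>Cs. y c) = l" unfolding y_def sum_distrib_left[symmetric] using assms by simp
  hence "(\<Sum>c\<in>Cs. a + (1 - a) * (y c - a)) = l"
    using assms a by (simp add: sum.distrib sum_distrib_left[symmetric] sum_subtractf)
  moreover have "(\<Sum>c\<in>Cs. Z / l * (exp (-a) * (a + (1 - a) * (y c - a))))
      = Z / l * exp (-a) * (\<Sum>c\<in>Cs. a + (1 - a) * (y c - a))"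
    by (simp add: sum_distrib_left mult.assoc)
  ultimately have total: "(\<Sum>c\<in>Cs. Z / l * (exp (-a) * (a + (1 - a) * (y c - a)))) = exp (-a) * Z"
    using assms by simp
  have "(\<Sum>c\<in>Cs. exp (-(l / Z * \<Phi> c)) * \<Phi> c)
      \<le> (\<Sum>c\<in>Cs. Z / l * (exp (-a) * (a + (1 - a) * (y c - a))))"
    by (intro sum_mono tangent)
  also have "\<dots> = exp (- l / k) * Z" unfolding total by (simp add: a_def)
  finally show ?thesis .
qed

definition kmpar_rate :: "real \<Rightarrow> nat \<Rightarrow> real" where
  "kmpar_rate l k = (if l < real k then exp (- l / real k) else real k / (exp 1 * l))"

lemma kmpar_rate_nonneg: "l > 0 \<Longrightarrow> 0 \<le> kmpar_rate l k"
  by (simp add: kmpar_rate_def)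

lemma kmpar_rate_less_one:
  assumes "l > 0" "k \<ge> 1"
  shows "kmpar_rate l k < 1"
proof (cases "l < real k")
  case False
  hence "real k / (exp 1 * l) \<le> l / (exp 1 * l)" using assms by (intro divide_right_mono) auto
  also have "\<dots> < 1" using assms by simp
  finally show ?thesis using False by (simp add: kmpar_rate_def)
qed (use assms in \<open>simp add: kmpar_rate_def\<close>)

lemma sum_mult_exp_neg_le_kmpar_rate:
  fixes Cs :: "'b set" and \<Phi> :: "'b \<Rightarrow> real" and Z l :: real
  assumes "finite Cs" "card Cs = k" "k \<ge> 1" "\<And>c. c \<in> Cs \<Longrightarrow> 0 \<le> \<Phi> c"
    "(\<Sum>c\<in>Cs. \<Phi> c) = Z" "Z > 0" "l > 0"
  shows "(\<Sum>c\<in>Cs. exp (-(l / Z * \<Phi> c)) * \<Phi> c) \<le> kmpar_rate l k * Z"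
  using sum_mult_exp_neg_le_exp[OF assms] sum_mult_exp_neg_le_card[OF assms(6,7), of \<Phi> Cs] assms(2)
  by (cases "l < real k") (auto simp: kmpar_rate_def)

definition nearest :: "'a::euclidean_space set \<Rightarrow> 'a \<Rightarrow> 'a" where
  "nearest Cs x = (SOME c. c \<in> Cs \<and> cost x Cs = (norm (x - c))^2)"

lemma nearest_attains_cost:
  "finite Cs \<Longrightarrow> Cs \<noteq> {} \<Longrightarrow> nearest Cs x \<in> Cs \<and> cost x Cs = (norm (x - nearest Cs x))^2"
  unfolding nearest_def by (rule someI_ex) (use cost_attained[of Cs x] in blast)

lemma cost_set_sum_clusters:
  assumes "finite X" "finite Cs" "Cs \<noteq> {}"
  shows "cost_set X D = (\<Sum>c\<in>Cs. cost_set {x\<in>X. nearest Cs x = c} D)"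
  unfolding cost_set_def by (rule sum.group[symmetric]) (use assms nearest_attains_cost in auto)

lemma sum_centroid_cost_clusters_le:
  assumes "finite X" "finite Cs" "Cs \<noteq> {}"
  shows "(\<Sum>c\<in>Cs. centroid_cost {x\<in>X. nearest Cs x = c}) \<le> cost_set X Cs"
proof -
  have "(\<Sum>c\<in>Cs. centroid_cost {x\<in>X. nearest Cs x = c})
      \<le> (\<Sum>c\<in>Cs. \<Sum>y\<in>{x\<in>X. nearest Cs x = c}. (norm (y - c))^2)"
    using assms by (intro sum_mono centroid_cost_le_sum_sq_dist) auto
  also have "\<dots> = (\<Sum>c\<in>Cs. cost_set {x\<in>X. nearest Cs x = c} Cs)"
    unfolding cost_set_def using nearest_attains_cost[OF assms(2,3)] by (intro sum.cong) auto
  also have "\<dots> = cost_set X Cs" using cost_set_sum_clusters[OF assms] by simp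
  finally show ?thesis .
qed

lemma expected_kmpar_step_cost_le:
  fixes X C Cs :: "'a::euclidean_space set"
  assumes X: "finite X" and C: "finite C" "C \<noteq> {}" and l: "l > 0"
    and Cs: "finite Cs" "card Cs = k" "k \<ge> 1"
  shows "measure_pmf.expectation (kmpar_step X l C) (\<lambda>D. cost_set X D)
         \<le> kmpar_rate l k * cost_set X C + 5 * cost_set X Cs"
proof -
  have "Cs \<noteq> {}" using Cs by auto
  define Z where "Z = cost_set X C"
  define A where "A c = {x\<in>X. nearest Cs x = c}" for c
  have A: "A c \<subseteq> X" for c by (auto simp: A_def)
  have split: "cost_set X D = (\<Sum>c\<in>Cs. cost_set (A c) D)" for D
    unfolding A_def by (rule cost_set_sum_clusters[OF X Cs(1) \<open>Cs \<noteq> {}\<close>])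
  let ?P = "Pi_pmf X False (\<lambda>x. bernoulli_pmf (min 1 (l / Z * cost x C)))"
  have E: "measure_pmf.expectation (kmpar_step X l C) (\<lambda>D. cost_set X D)
      = measure_pmf.expectation ?P (\<lambda>b. cost_set X (C \<union> {x\<in>X. b x}))"
    by (simp add: kmpar_step_def Z_def)
  show ?thesis
  proof (cases "Z = 0")
    case True
    have "measure_pmf.expectation ?P (\<lambda>b. cost_set X (C \<union> {x\<in>X. b x}))
        \<le> measure_pmf.expectation ?P (\<lambda>_. cost_set X C)"
      using X C by (intro expectation_mono_finite finite_set_Pi_pmf_bool cost_set_antimono) auto
    thus ?thesis
      using E True kmpar_rate_nonneg[OF l] cost_set_nonneg[OF Cs(1) \<open>Cs \<noteq> {}\<close>, of X]
      by (simp add: Z_def)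
  next
    case False
    hence Z: "Z > 0" using cost_set_nonneg[OF C, of X] by (simp add: Z_def)
    have "measure_pmf.expectation ?P (\<lambda>b. cost_set X (C \<union> {x\<in>X. b x}))
        = (\<Sum>c\<in>Cs. measure_pmf.expectation ?P (\<lambda>b. cost_set (A c) (C \<union> {x\<in>X. b x})))"
      unfolding split
      by (rule Bochner_Integration.integral_sum)
        (rule integrable_measure_pmf_finite[OF finite_set_Pi_pmf_bool[OF X]])
    also have "\<dots> \<le> (\<Sum>c\<in>Cs. exp (-(l / Z * cost_set (A c) C)) * cost_set (A c) C
                              + 5 * centroid_cost (A c))"
      using Z l by (intro sum_mono expected_cluster_cost_le[OF X A C]) auto
    also have "\<dots> \<le> kmpar_rate l k * Z + 5 * cost_set X Cs"
    proof -
      have "(\<Sum>c\<in>Cs. exp (-(l / Z * cost_set (A c) C)) * cost_set (A c) C) \<le> kmpar_rate l k * Z"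
        using split[of C] cost_set_nonneg[OF C] Z l
        by (intro sum_mult_exp_neg_le_kmpar_rate[OF Cs]) (auto simp: Z_def)
      moreover have "(\<Sum>c\<in>Cs. centroid_cost (A c)) \<le> cost_set X Cs"
        unfolding A_def by (rule sum_centroid_cost_clusters_le[OF X Cs(1) \<open>Cs \<noteq> {}\<close>])
      ultimately show ?thesis by (simp add: sum.distrib sum_distrib_left[symmetric])
    qed
    finally show ?thesis using E by (simp add: Z_def)
  qed
qed

lemma kmpar_step_subset:
  assumes "finite X" "C \<subseteq> X" "C \<noteq> {}" "D \<in> set_pmf (kmpar_step X l C)"
  shows "D \<subseteq> X \<and> D \<noteq> {}"
  using assms by (auto simp: kmpar_step_def)

lemma kmpar_seed_subset:
  assumes "finite X" "X \<noteq> {}" "C \<in> set_pmf (kmpar_seed X l t)"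
  shows "C \<subseteq> X" "C \<noteq> {}"
proof -
  have "C \<subseteq> X \<and> C \<noteq> {}" using assms(3)
  proof (induction t arbitrary: C)
    case 0
    thus ?case using assms(1,2) by (auto simp: set_pmf_of_set)
  next
    case (Suc t)
    then obtain C' where "C' \<in> set_pmf (kmpar_seed X l t)" "C \<in> set_pmf (kmpar_step X l C')"
      by (auto simp: set_bind_pmf)
    thus ?case using Suc.IH kmpar_step_subset[OF assms(1)] by blast
  qed
  thus "C \<subseteq> X" "C \<noteq> {}" by auto
qed

lemma finite_set_kmpar_seed:
  assumes "finite X" "X \<noteq> {}"
  shows "finite (set_pmf (kmpar_seed X l t))"
proof (rule finite_subset)
  show "set_pmf (kmpar_seed X l t) \<subseteq> Pow X" using kmpar_seed_subset(1)[OF assms] by blast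
qed (use assms in simp)

lemma expected_cost_Suc_le:
  fixes X Cs :: "'a::euclidean_space set"
  assumes X: "finite X" "X \<noteq> {}" and l: "l > 0" and Cs: "finite Cs" "card Cs = k" "k \<ge> 1"
  shows "expected_cost X l (Suc t) \<le> kmpar_rate l k * expected_cost X l t + 5 * cost_set X Cs"
proof -
  let ?p = "kmpar_seed X l t"
  have fin: "finite (set_pmf ?p)" by (rule finite_set_kmpar_seed[OF X])
  have "expected_cost X l (Suc t)
      = measure_pmf.expectation ?p (\<lambda>C. measure_pmf.expectation (kmpar_step X l C) (\<lambda>D. cost_set X D))"
    unfolding expected_cost_def
    by (simp add: expectation_bind_pmf_finite fin kmpar_step_def finite_set_Pi_pmf_bool X)
  also have "\<dots> \<le> measure_pmf.expectation ?p (\<lambda>C. kmpar_rate l k * cost_set X C + 5 * cost_set X Cs)"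
  proof (rule expectation_mono_finite[OF fin])
    fix C assume "C \<in> set_pmf ?p"
    hence "C \<subseteq> X" "C \<noteq> {}" using kmpar_seed_subset[OF X] by auto
    thus "measure_pmf.expectation (kmpar_step X l C) (\<lambda>D. cost_set X D)
        \<le> kmpar_rate l k * cost_set X C + 5 * cost_set X Cs"
      using finite_subset[OF _ X(1)] expected_kmpar_step_cost_le[OF X(1) _ _ l Cs] by blast
  qed
  also have "\<dots> = kmpar_rate l k * expected_cost X l t + 5 * cost_set X Cs"
    unfolding expected_cost_def
    using integrable_measure_pmf_finite[OF fin, of "\<lambda>C. cost_set X C"] by simp
  finally show ?thesis .
qed

lemma expected_cost_le_geometric:
  fixes X Cs :: "'a::euclidean_space set"
  assumes X: "finite X" "X \<noteq> {}" and l: "l > 0" and Cs: "finite Cs" "card Cs = k" "k \<ge> 1"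
  shows "expected_cost X l T
    \<le> kmpar_rate l k ^ T * expected_cost X l 0 + 5 * cost_set X Cs * (\<Sum>i<T. kmpar_rate l k ^ i)"
proof (induction T)
  case (Suc T)
  let ?r = "kmpar_rate l k"
  have "expected_cost X l (Suc T) \<le> ?r * expected_cost X l T + 5 * cost_set X Cs"
    by (rule expected_cost_Suc_le[OF X l Cs])
  also have "\<dots> \<le> ?r * (?r ^ T * expected_cost X l 0 + 5 * cost_set X Cs * (\<Sum>i<T. ?r ^ i))
                  + 5 * cost_set X Cs"
    using Suc kmpar_rate_nonneg[OF l] by (intro add_right_mono mult_left_mono) auto
  also have "\<dots> = ?r ^ Suc T * expected_cost X l 0 + 5 * cost_set X Cs * (\<Sum>i<Suc T. ?r ^ i)"
    by (simp add: sum_distrib_left algebra_simps sum.lessThan_Suc_shift del: sum.lessThan_Suc)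
  finally show ?case .
qed simp

lemma infinite_UNIV_euclidean: "infinite (UNIV :: 'a::euclidean_space set)"
proof
  assume "finite (UNIV :: 'a set)"
  obtain b :: 'a where "b \<in> Basis" using nonempty_Basis by blast
  hence "inj (\<lambda>r::real. r *\<^sub>R b)" by (auto simp: inj_def)
  moreover have "finite (range (\<lambda>r::real. r *\<^sub>R b))"
    using \<open>finite UNIV\<close> by (rule finite_subset[rotated]) simp
  ultimately show False using finite_imageD infinite_UNIV_char_0 by blast
qed

lemma expected_cost_le_OPT:
  fixes X :: "'a::euclidean_space set"
  assumes X: "finite X" "X \<noteq> {}" and l: "l > 0" and k: "k \<ge> 1"
  shows "expected_cost X l T
    \<le> kmpar_rate l k ^ T * expected_cost X l 0 + 5 * OPT k X / (1 - kmpar_rate l k)"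
proof -
  define r where "r = kmpar_rate l k"
  have r: "0 \<le> r" "r < 1" using kmpar_rate_nonneg[OF l] kmpar_rate_less_one[OF l k] by (auto simp: r_def)
  define S where "S = {cost_set X C | C :: 'a set. finite C \<and> card C = k}"
  have "(expected_cost X l T - r ^ T * expected_cost X l 0) * (1 - r) / 5 \<le> s" if "s \<in> S" for s
  proof -
    obtain Cs where Cs: "finite Cs" "card Cs = k" "s = cost_set X Cs" using \<open>s \<in> S\<close> by (auto simp: S_def)
    have "Cs \<noteq> {}" using Cs(2) k by auto
    hence "0 \<le> s" using Cs(1,3) cost_set_nonneg by simp
    have "(1 - r) * (\<Sum>i<T. r ^ i) = 1 - r ^ T" by (rule one_diff_power_eq[symmetric])
    also have "\<dots> \<le> 1" using r by simp
    finally have "(\<Sum>i<T. r ^ i) \<le> 1 / (1 - r)" using r by (simp add: le_divide_eq mult.commute)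
    have "expected_cost X l T \<le> r ^ T * expected_cost X l 0 + 5 * s * (\<Sum>i<T. r ^ i)"
      unfolding r_def Cs(3) by (rule expected_cost_le_geometric[OF X l Cs(1,2) k])
    also have "5 * s * (\<Sum>i<T. r ^ i) \<le> 5 * s * (1 / (1 - r))"
      using \<open>0 \<le> s\<close> \<open>(\<Sum>i<T. r ^ i) \<le> 1 / (1 - r)\<close> by (intro mult_left_mono) auto
    finally show ?thesis using r by (simp add: field_simps)
  qed
  moreover obtain B :: "'a set" where "finite B" "card B = k"
    using infinite_arbitrarily_large[OF infinite_UNIV_euclidean] by blast
  hence "S \<noteq> {}" by (auto simp: S_def)
  ultimately have "(expected_cost X l T - r ^ T * expected_cost X l 0) * (1 - r) / 5 \<le> OPT k X"
    unfolding OPT_def S_def[symmetric] by (intro cInf_greatest)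
  thus ?thesis using r by (simp add: r_def field_simps)
qed

theorem mainTheorem10:
  fixes X :: "'a::euclidean_space set" and k T :: nat and l :: real
  assumes "finite X" and "X \<noteq> {}" and "k \<ge> 1" and "l > 0" and "T \<ge> 1"
  shows "(l < k \<longrightarrow>
            expected_cost X l T \<le> (exp (- l / k)) ^ T * expected_cost X l 0
              + 5 * OPT k X / (1 - exp (- l / k)))
       \<and> (l \<ge> k \<longrightarrow>
            expected_cost X l T \<le> (k / (exp 1 * l)) ^ T * expected_cost X l 0
              + 5 * OPT k X / (1 - k / (exp 1 * l)))"
  using expected_cost_le_OPT[OF assms(1,2,4,3), of T] by (auto simp: kmpar_rate_def)

end
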